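(* Let $\mathbb{A}$ be a 2-category and $p:e\to b$ a 1-cell such that $\mathbb{A}$ has the two-dimensional cokernel diagram of $p$ and $p$ has a codensity monad, i.e. a right Kan extension $(t,\gamma)$ of $p$ along $p$ exists. Then there is a unique 1-cell $\ell:b\uparrow_p b\to b$ such that $\ell\delta^0=\mathrm{id}_b$, $\ell\delta^1=t$ and $\mathrm{id}_\ell\ast\alpha=\gamma$; moreover the right Kan extension of $\mathrm{id}_b$ along $\delta^0$ exists and is given by the pair $(\ell,\mathrm{id}_{\mathrm{id}_b})$.
   Context: A 2-category is a $\mathbf{Cat}$-enriched category; composition of 1-cells is juxtaposition, vertical composition of 2-cells is $\cdot$, horizontal composition is $\ast$, $\mathrm{id}_f$ is the identity 2-cell on $f$. Opcomma object of $p$ along itself: an object $b\uparrow_p b$ with 1-cells $\delta^0,\delta^1:b\to b\uparrow_p b$ and a 2-cell $\alpha:\delta^1p\Rightarrow\delta^0p$ such that for every object $y$ the functor $h\mapsto(h\delta^0,h\delta^1,\mathrm{id}_h\ast\alpha)$, $\xi\mapsto(\xi\ast\mathrm{id}_{\delta^0},\xi\ast\mathrm{id}_{\delta^1})$ is an isomorphism from $\mathbb{A}(b\uparrow_p b,y)$ onto the category of triples $(h_0,h_1:b\to y,\ \beta:h_1p\Rightarrow h_0p)$ with morphisms pairs of 2-cells $(\xi_0:h_0\Rightarrow h_0',\xi_1:h_1\Rightarrow h_1')$ satisfying $(\xi_0\ast\mathrm{id}_p)\cdot\beta=\beta'\cdot(\xi_1\ast\mathrm{id}_p)$. Two-dimensional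 pushout of a span $f_0:c\to c_0$, $f_1:c\to c_1$: an object $P$ with $q_0:c_0\to P$, $q_1:c_1\to P$, $q_0f_0=q_1f_1$, such that for every $y$, $k\mapsto(kq_0,kq_1)$ is an isomorphism from $\mathbb{A}(P,y)$ onto the category of pairs $(k_0,k_1)$ with $k_0f_0=k_1f_1$, whose morphisms are pairs of 2-cells $(\xi_0,\xi_1)$ with $\xi_0\ast\mathrm{id}_{f_0}=\xi_1\ast\mathrm{id}_{f_1}$. $\mathbb{A}$ has the two-dimensional cokernel diagram of $p$ if it has an opcomma object $b\uparrow_p b$ of $p$ along itself and a two-dimensional pushout $b\uparrow_pb\uparrow_pb$ of the span $(\delta^0,\delta^1)$, with 1-cells $D^0,D^2:b\uparrow_pb\to b\uparrow_pb\uparrow_pb$ satisfying $D^2\delta^0=D^0\delta^1$. Right Kan extension of $f:z\to y$ along $g:z\to x$: a pair $(r:x\to y,\gamma:rg\Rightarrow f)$ such that for each $k:x\to y$, $\beta\mapsto\gamma\cdot(\beta\ast\mathrm{id}_g)$ is a bijection from 2-cells $k\Rightarrow r$ to 2-cells $kg\Rightarrow f$. *)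

theory Defs
  imports Main
begin

text \<open>A (strict) 2-category, i.e. a Cat-enriched category, presented by its
objects (type 'o), 1-cells (type 'a) and 2-cells (type 'c).
comp1 g f is the juxtaposition g f (first f, then g);
vcomp b a is b \<cdot> a (first a, then b); hcomp x y is x \<ast> y, for
x : g \<Rightarrow> g', y : f \<Rightarrow> f' it is a 2-cell g f \<Rightarrow> g' f'.\<close>

record ('o,'a,'c) twocat =
  dom1 :: "'a \<Rightarrow> 'o"
  cod1 :: "'a \<Rightarrow> 'o"
  id1 :: "'o \<Rightarrow> 'a"
  comp1 :: "'a \<Rightarrow> 'a \<Rightarrow> 'a"
  dom2 :: "'c \<Rightarrow> 'a"
  cod2 :: "'c \<Rightarrow> 'a"
  id2 :: "'a \<Rightarrow> 'c"
  vcomp :: "'c \<Rightarrow> 'c \<Rightarrow> 'c"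
  hcomp :: "'c \<Rightarrow> 'c \<Rightarrow> 'c"

definition hom1 :: "('o,'a,'c,'m) twocat_scheme \<Rightarrow> 'o \<Rightarrow> 'o \<Rightarrow> 'a set" where
  "hom1 C x y = {f. dom1 C f = x \<and> cod1 C f = y}"

definition hom2 :: "('o,'a,'c,'m) twocat_scheme \<Rightarrow> 'a \<Rightarrow> 'a \<Rightarrow> 'c set" where
  "hom2 C f g = {a. dom2 C a = f \<and> cod2 C a = g}"

definition two_category :: "('o,'a,'c,'m) twocat_scheme \<Rightarrow> bool" where
  "two_category C \<longleftrightarrow>
    \<comment> \<open>underlying category of 1-cells\<close>
    (\<forall>x. dom1 C (id1 C x) = x \<and> cod1 C (id1 C x) = x) \<and>
    (\<forall>f g. dom1 C g = cod1 C f \<longrightarrow>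
        dom1 C (comp1 C g f) = dom1 C f \<and> cod1 C (comp1 C g f) = cod1 C g) \<and>
    (\<forall>f. comp1 C (id1 C (cod1 C f)) f = f \<and> comp1 C f (id1 C (dom1 C f)) = f) \<and>
    (\<forall>f g h. dom1 C g = cod1 C f \<and> dom1 C h = cod1 C g \<longrightarrow>
        comp1 C h (comp1 C g f) = comp1 C (comp1 C h g) f) \<and>
    \<comment> \<open>hom-categories: 2-cells go between parallel 1-cells\<close>
    (\<forall>a. dom1 C (dom2 C a) = dom1 C (cod2 C a) \<and> cod1 C (dom2 C a) = cod1 C (cod2 C a)) \<and>
    (\<forall>f. dom2 C (id2 C f) = f \<and> cod2 C (id2 C f) = f) \<and>
    (\<forall>a b. dom2 C b = cod2 C a \<longrightarrow>
        dom2 C (vcomp C b a) = dom2 C a \<and> cod2 C (vcomp C b a) = cod2 C b) \<and>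
    (\<forall>a. vcomp C (id2 C (cod2 C a)) a = a \<and> vcomp C a (id2 C (dom2 C a)) = a) \<and>
    (\<forall>a b c. dom2 C b = cod2 C a \<and> dom2 C c = cod2 C b \<longrightarrow>
        vcomp C c (vcomp C b a) = vcomp C (vcomp C c b) a) \<and>
    \<comment> \<open>composition functors\<close>
    (\<forall>x y. dom1 C (dom2 C x) = cod1 C (dom2 C y) \<longrightarrow>
        dom2 C (hcomp C x y) = comp1 C (dom2 C x) (dom2 C y) \<and>
        cod2 C (hcomp C x y) = comp1 C (cod2 C x) (cod2 C y)) \<and>
    (\<forall>f g. dom1 C g = cod1 C f \<longrightarrow> hcomp C (id2 C g) (id2 C f) = id2 C (comp1 C g f)) \<and>
    (\<forall>x x' y y'. dom2 C x' = cod2 C x \<and> dom2 C y' = cod2 C y \<and>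
        dom1 C (dom2 C x) = cod1 C (dom2 C y) \<longrightarrow>
        hcomp C (vcomp C x' x) (vcomp C y' y) = vcomp C (hcomp C x' y') (hcomp C x y)) \<and>
    \<comment> \<open>strict associativity and unitality of horizontal composition\<close>
    (\<forall>x y z. dom1 C (dom2 C y) = cod1 C (dom2 C x) \<and> dom1 C (dom2 C z) = cod1 C (dom2 C y) \<longrightarrow>
        hcomp C z (hcomp C y x) = hcomp C (hcomp C z y) x) \<and>
    (\<forall>a. hcomp C (id2 C (id1 C (cod1 C (dom2 C a)))) a = a \<and>
         hcomp C a (id2 C (id1 C (dom1 C (dom2 C a)))) = a)"

text \<open>Opcomma object (B, d0, d1, al) of p : e \<rightarrow> b along itself. The comparison functor
A(B,y) \<rightarrow> triples is an isomorphism: bijective on objects and on each hom-set.\<close>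
definition is_opcomma :: "('o,'a,'c,'m) twocat_scheme \<Rightarrow> 'a \<Rightarrow> 'o \<Rightarrow> 'a \<Rightarrow> 'a \<Rightarrow> 'c \<Rightarrow> bool" where
  "is_opcomma C p B d0 d1 al \<longleftrightarrow>
    d0 \<in> hom1 C (cod1 C p) B \<and> d1 \<in> hom1 C (cod1 C p) B \<and>
    al \<in> hom2 C (comp1 C d1 p) (comp1 C d0 p) \<and>
    (\<forall>y. bij_betw (\<lambda>h. (comp1 C h d0, comp1 C h d1, hcomp C (id2 C h) al))
            (hom1 C B y)
            {(h0, h1, be). h0 \<in> hom1 C (cod1 C p) y \<and> h1 \<in> hom1 C (cod1 C p) y \<and>
                 be \<in> hom2 C (comp1 C h1 p) (comp1 C h0 p)} \<and>
         (\<forall>h\<in>hom1 C B y. \<forall>h'\<in>hom1 C B y.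
            bij_betw (\<lambda>xi. (hcomp C xi (id2 C d0), hcomp C xi (id2 C d1)))
              (hom2 C h h')
              {(xi0, xi1). xi0 \<in> hom2 C (comp1 C h d0) (comp1 C h' d0) \<and>
                 xi1 \<in> hom2 C (comp1 C h d1) (comp1 C h' d1) \<and>
                 vcomp C (hcomp C xi0 (id2 C p)) (hcomp C (id2 C h) al) =
                 vcomp C (hcomp C (id2 C h') al) (hcomp C xi1 (id2 C p))}))"

definition is_2pushout :: "('o,'a,'c,'m) twocat_scheme \<Rightarrow> 'a \<Rightarrow> 'a \<Rightarrow> 'o \<Rightarrow> 'a \<Rightarrow> 'a \<Rightarrow> bool" where
  "is_2pushout C f0 f1 P q0 q1 \<longleftrightarrow>
    dom1 C f0 = dom1 C f1 \<and>
    q0 \<in> hom1 C (cod1 C f0) P \<and> q1 \<in> hom1 C (cod1 C f1) P \<and>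
    comp1 C q0 f0 = comp1 C q1 f1 \<and>
    (\<forall>y. bij_betw (\<lambda>k. (comp1 C k q0, comp1 C k q1))
            (hom1 C P y)
            {(k0, k1). k0 \<in> hom1 C (cod1 C f0) y \<and> k1 \<in> hom1 C (cod1 C f1) y \<and>
                 comp1 C k0 f0 = comp1 C k1 f1} \<and>
         (\<forall>k\<in>hom1 C P y. \<forall>k'\<in>hom1 C P y.
            bij_betw (\<lambda>xi. (hcomp C xi (id2 C q0), hcomp C xi (id2 C q1)))
              (hom2 C k k')
              {(xi0, xi1). xi0 \<in> hom2 C (comp1 C k q0) (comp1 C k' q0) \<and>
                 xi1 \<in> hom2 C (comp1 C k q1) (comp1 C k' q1) \<and>
                 hcomp C xi0 (id2 C f0) = hcomp C xi1 (id2 C f1)}))"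

definition is_ran :: "('o,'a,'c,'m) twocat_scheme \<Rightarrow> 'a \<Rightarrow> 'a \<Rightarrow> 'a \<Rightarrow> 'c \<Rightarrow> bool" where
  "is_ran C f g r ga \<longleftrightarrow>
    dom1 C f = dom1 C g \<and>
    r \<in> hom1 C (cod1 C g) (cod1 C f) \<and>
    ga \<in> hom2 C (comp1 C r g) f \<and>
    (\<forall>k\<in>hom1 C (cod1 C g) (cod1 C f).
       bij_betw (\<lambda>be. vcomp C ga (hcomp C be (id2 C g))) (hom2 C k r) (hom2 C (comp1 C k g) f))"

end

theory Submission
  imports Defs
begin

(* The triple (id, t, \<gamma>) induces, by the universal property of the opcomma object, a
   unique \<ell> : b\<uparrow>\<^sub>pb \<rightarrow> b. A 2-cell k \<Rightarrow> \<ell> is the same as a pair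
   (\<xi>\<^sub>0 : k \<delta>\<^sup>0 \<Rightarrow> id, \<xi>\<^sub>1 : k \<delta>\<^sup>1 \<Rightarrow> t) compatible with \<alpha> and \<gamma>, and since (t, \<gamma>)
   is a right Kan extension, \<xi>\<^sub>1 is uniquely determined by \<xi>\<^sub>0. So whiskering with \<delta>\<^sup>0 is
   a bijection from 2-cells k \<Rightarrow> \<ell> to 2-cells k \<delta>\<^sup>0 \<Rightarrow> id, which says that (\<ell>, id) is the
   right Kan extension of id along \<delta>\<^sup>0. *)

lemma bij_betw_ex1_preimage:
  assumes "bij_betw f A B" and "y \<in> B"
  shows "\<exists>!x. x \<in> A \<and> f x = y"
  using assms unfolding bij_betw_def inj_on_def by blast

lemma bij_betw_fst_graph:
  assumes "\<And>x. x \<in> A \<Longrightarrow> \<exists>!y. (x, y) \<in> S" and "fst ` S \<subseteq> A"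
  shows "bij_betw fst S A"
proof -
  have "inj_on fst S"
    using assms by (force simp: inj_on_def)
  moreover have "A \<subseteq> fst ` S"
    using assms(1) by (force intro: rev_image_eqI)
  ultimately show ?thesis
    using assms(2) by (auto simp: bij_betw_def)
qed

lemma opcomma_ex1_factorization:
  assumes "is_opcomma C p B d0 d1 al"
    and "h0 \<in> hom1 C (cod1 C p) y" and "h1 \<in> hom1 C (cod1 C p) y"
    and "be \<in> hom2 C (comp1 C h1 p) (comp1 C h0 p)"
  shows "\<exists>!h. h \<in> hom1 C B y \<and> comp1 C h d0 = h0 \<and> comp1 C h d1 = h1 \<and>
              hcomp C (id2 C h) al = be"
proof -
  have "\<exists>!h. h \<in> hom1 C B y \<and>
          (comp1 C h d0, comp1 C h d1, hcomp C (id2 C h) al) = (h0, h1, be)"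
    using assms unfolding is_opcomma_def by (intro bij_betw_ex1_preimage) auto
  then show ?thesis
    by simp
qed

lemma opcomma_whisker_bij:
  assumes "is_opcomma C p B d0 d1 al" and "h \<in> hom1 C B y" and "h' \<in> hom1 C B y"
  shows "bij_betw (\<lambda>xi. (hcomp C xi (id2 C d0), hcomp C xi (id2 C d1))) (hom2 C h h')
     {(xi0, xi1). xi0 \<in> hom2 C (comp1 C h d0) (comp1 C h' d0) \<and>
        xi1 \<in> hom2 C (comp1 C h d1) (comp1 C h' d1) \<and>
        vcomp C (hcomp C xi0 (id2 C p)) (hcomp C (id2 C h) al) =
        vcomp C (hcomp C (id2 C h') al) (hcomp C xi1 (id2 C p))}"
  using assms unfolding is_opcomma_def by blast

locale strict_two_category =
  fixes C :: "('o,'a,'c,'m) twocat_scheme"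
  assumes two_category: "two_category C"
begin

lemma id1_in_hom: "id1 C x \<in> hom1 C x x"
  using two_category unfolding two_category_def hom1_def by force

lemma comp1_in_hom:
  "f \<in> hom1 C x y \<Longrightarrow> g \<in> hom1 C y z \<Longrightarrow> comp1 C g f \<in> hom1 C x z"
  using two_category unfolding two_category_def hom1_def by force

lemma comp1_id_left: "f \<in> hom1 C x y \<Longrightarrow> comp1 C (id1 C y) f = f"
  using two_category unfolding two_category_def hom1_def by force

lemma comp1_assoc:
  "f \<in> hom1 C w x \<Longrightarrow> g \<in> hom1 C x y \<Longrightarrow> h \<in> hom1 C y z \<Longrightarrow>
   comp1 C h (comp1 C g f) = comp1 C (comp1 C h g) f"
  using two_category unfolding two_category_def hom1_def by force

lemma id2_in_hom: "id2 C f \<in> hom2 C f f"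
  using two_category unfolding two_category_def hom2_def by force

lemma vcomp_in_hom:
  "a \<in> hom2 C f g \<Longrightarrow> b \<in> hom2 C g h \<Longrightarrow> vcomp C b a \<in> hom2 C f h"
  using two_category unfolding two_category_def hom2_def by force

lemma vcomp_id_left: "a \<in> hom2 C f g \<Longrightarrow> vcomp C (id2 C g) a = a"
  using two_category unfolding two_category_def hom2_def by force

lemma hcomp_in_hom:
  assumes "y \<in> hom2 C f f'" and "x \<in> hom2 C g g'" and "f \<in> hom1 C u v" and "g \<in> hom1 C v w"
  shows "hcomp C x y \<in> hom2 C (comp1 C g f) (comp1 C g' f')"
  using two_category assms unfolding two_category_def hom1_def hom2_def by force

lemma opcomma_pasting_in_hom:
  assumes oc: "is_opcomma C p B d0 d1 al"
    and k: "k \<in> hom1 C B y" and g: "g \<in> hom1 C (cod1 C p) y"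
    and xi0: "xi0 \<in> hom2 C (comp1 C k d0) g"
  shows "vcomp C (hcomp C xi0 (id2 C p)) (hcomp C (id2 C k) al) \<in>
           hom2 C (comp1 C (comp1 C k d1) p) (comp1 C g p)"
proof (rule vcomp_in_hom)
  have p: "p \<in> hom1 C (dom1 C p) (cod1 C p)"
    by (simp add: hom1_def)
  have d0: "d0 \<in> hom1 C (cod1 C p) B" and d1: "d1 \<in> hom1 C (cod1 C p) B"
    and al: "al \<in> hom2 C (comp1 C d1 p) (comp1 C d0 p)"
    using oc by (auto simp: is_opcomma_def)
  show "hcomp C (id2 C k) al \<in> hom2 C (comp1 C (comp1 C k d1) p) (comp1 C (comp1 C k d0) p)"
    using hcomp_in_hom[OF al id2_in_hom comp1_in_hom[OF p d1] k]
    by (simp add: comp1_assoc[OF p d0 k] comp1_assoc[OF p d1 k])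
  show "hcomp C xi0 (id2 C p) \<in> hom2 C (comp1 C (comp1 C k d0) p) (comp1 C g p)"
    using hcomp_in_hom[OF id2_in_hom xi0 p comp1_in_hom[OF d0 k]] .
qed

(* A 2-cell k \<Rightarrow> h is a pair (\<xi>\<^sub>0, \<xi>\<^sub>1) compatible with \<alpha>, and the Kan property determines
   \<xi>\<^sub>1 from \<xi>\<^sub>0: so only the whiskering with \<delta>\<^sup>0 remains. *)
lemma whisker_opcomma_coprojection_bij:
  assumes oc: "is_opcomma C p B d0 d1 al"
    and h: "h \<in> hom1 C B y" and k: "k \<in> hom1 C B y"
    and ran: "is_ran C (comp1 C (comp1 C h d0) p) p (comp1 C h d1) (hcomp C (id2 C h) al)"
  shows "bij_betw (\<lambda>xi. hcomp C xi (id2 C d0)) (hom2 C k h) (hom2 C (comp1 C k d0) (comp1 C h d0))"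
proof -
  have d0: "d0 \<in> hom1 C (cod1 C p) B" and d1: "d1 \<in> hom1 C (cod1 C p) B"
    using oc by (auto simp: is_opcomma_def)
  have hd0: "comp1 C h d0 \<in> hom1 C (cod1 C p) y" and kd1: "comp1 C k d1 \<in> hom1 C (cod1 C p) y"
    using comp1_in_hom[OF d0 h] comp1_in_hom[OF d1 k] .
  have kan: "bij_betw (\<lambda>be. vcomp C (hcomp C (id2 C h) al) (hcomp C be (id2 C p)))
      (hom2 C (comp1 C k d1) (comp1 C h d1))
      (hom2 C (comp1 C (comp1 C k d1) p) (comp1 C (comp1 C h d0) p))"
    using ran kd1 comp1_in_hom[of p "dom1 C p" "cod1 C p", OF _ hd0]
    by (simp add: is_ran_def hom1_def)
  define S where "S = {(xi0, xi1). xi0 \<in> hom2 C (comp1 C k d0) (comp1 C h d0) \<and>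
    xi1 \<in> hom2 C (comp1 C k d1) (comp1 C h d1) \<and>
    vcomp C (hcomp C xi0 (id2 C p)) (hcomp C (id2 C k) al) =
    vcomp C (hcomp C (id2 C h) al) (hcomp C xi1 (id2 C p))}"
  have "bij_betw (\<lambda>xi. (hcomp C xi (id2 C d0), hcomp C xi (id2 C d1))) (hom2 C k h) S"
    using opcomma_whisker_bij[OF oc k h] unfolding S_def .
  moreover have "bij_betw fst S (hom2 C (comp1 C k d0) (comp1 C h d0))"
  proof (rule bij_betw_fst_graph)
    fix xi0
    assume xi0: "xi0 \<in> hom2 C (comp1 C k d0) (comp1 C h d0)"
    have "\<exists>!xi1. xi1 \<in> hom2 C (comp1 C k d1) (comp1 C h d1) \<and>
        vcomp C (hcomp C (id2 C h) al) (hcomp C xi1 (id2 C p)) =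
        vcomp C (hcomp C xi0 (id2 C p)) (hcomp C (id2 C k) al)"
      using bij_betw_ex1_preimage[OF kan opcomma_pasting_in_hom[OF oc k hd0 xi0]] .
    then show "\<exists>!xi1. (xi0, xi1) \<in> S"
      using xi0 by (simp add: S_def eq_commute)
  qed (auto simp: S_def)
  ultimately show ?thesis
    by (auto dest: bij_betw_trans simp: comp_def)
qed

lemma ran_along_opcomma_coprojection:
  assumes oc: "is_opcomma C p B d0 d1 al"
    and h: "h \<in> hom1 C B y"
    and ran: "is_ran C (comp1 C (comp1 C h d0) p) p (comp1 C h d1) (hcomp C (id2 C h) al)"
  shows "is_ran C (comp1 C h d0) d0 h (id2 C (comp1 C h d0))"
  unfolding is_ran_def
proof (intro conjI ballI)
  have d0: "d0 \<in> hom1 C (cod1 C p) B"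
    using oc by (auto simp: is_opcomma_def)
  then have hd0: "comp1 C h d0 \<in> hom1 C (cod1 C p) y"
    using comp1_in_hom h by blast
  then show "dom1 C (comp1 C h d0) = dom1 C d0"
    and "h \<in> hom1 C (cod1 C d0) (cod1 C (comp1 C h d0))"
    using h d0 by (simp_all add: hom1_def)
  show "id2 C (comp1 C h d0) \<in> hom2 C (comp1 C h d0) (comp1 C h d0)"
    by (rule id2_in_hom)
  fix k
  assume "k \<in> hom1 C (cod1 C d0) (cod1 C (comp1 C h d0))"
  then have k: "k \<in> hom1 C B y"
    using hd0 d0 by (simp add: hom1_def)
  have "vcomp C (id2 C (comp1 C h d0)) (hcomp C xi (id2 C d0)) = hcomp C xi (id2 C d0)"
    if "xi \<in> hom2 C k h" for xi
    using vcomp_id_left[OF hcomp_in_hom[OF id2_in_hom that d0 k]] .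
  with whisker_opcomma_coprojection_bij[OF oc h k ran]
  show "bij_betw (\<lambda>xi. vcomp C (id2 C (comp1 C h d0)) (hcomp C xi (id2 C d0)))
      (hom2 C k h) (hom2 C (comp1 C k d0) (comp1 C h d0))"
    by (simp cong: bij_betw_cong)
qed

end

theorem proposition4p1:
  fixes C :: "('o,'a,'c) twocat"
  assumes "two_category C"
    and "p \<in> hom1 C e b"
    and "is_opcomma C p B d0 d1 al"
    and "is_2pushout C d0 d1 B3 D2 D0"
    and "is_ran C p p t ga"
  shows "\<exists>l. l \<in> hom1 C B b \<and> comp1 C l d0 = id1 C b \<and> comp1 C l d1 = t \<and>
             hcomp C (id2 C l) al = ga \<and>
             (\<forall>l'. l' \<in> hom1 C B b \<and> comp1 C l' d0 = id1 C b \<and> comp1 C l' d1 = t \<and>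
                    hcomp C (id2 C l') al = ga \<longrightarrow> l' = l) \<and>
             is_ran C (id1 C b) d0 l (id2 C (id1 C b))"
proof -
  interpret strict_two_category C
    using assms(1) by (rule strict_two_category.intro)
  have p: "p \<in> hom1 C e b" and pb: "cod1 C p = b"
    using assms(2) by (auto simp: hom1_def)
  have idp: "comp1 C (id1 C b) p = p"
    using comp1_id_left[OF p] .
  have t: "t \<in> hom1 C b b" and ga: "ga \<in> hom2 C (comp1 C t p) (comp1 C (id1 C b) p)"
    using assms(5) by (auto simp: is_ran_def pb idp)
  have "\<exists>!l. l \<in> hom1 C B b \<and> comp1 C l d0 = id1 C b \<and> comp1 C l d1 = t \<and>
             hcomp C (id2 C l) al = ga"
    using opcomma_ex1_factorization[OF assms(3), unfolded pb, OF id1_in_hom t ga] .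
  then obtain l where l: "l \<in> hom1 C B b" "comp1 C l d0 = id1 C b" "comp1 C l d1 = t"
      "hcomp C (id2 C l) al = ga"
    and unique: "\<forall>l'. l' \<in> hom1 C B b \<and> comp1 C l' d0 = id1 C b \<and> comp1 C l' d1 = t \<and>
                    hcomp C (id2 C l') al = ga \<longrightarrow> l' = l"
    by (elim ex1E) blast
  have "is_ran C (comp1 C (comp1 C l d0) p) p (comp1 C l d1) (hcomp C (id2 C l) al)"
    using assms(5) l idp by simp
  then have "is_ran C (id1 C b) d0 l (id2 C (id1 C b))"
    using ran_along_opcomma_coprojection[OF assms(3) l(1)] l(2) by simp
  then show ?thesis
    using l unique by blast
qed

end
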